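(* Let $p\ge 1$ and $c>0$ be constants, let $a>0$, and let $x_a:[0,\infty)\to\mathbb{R}$ be the unique solution of $$x'''+c\,x^p\, x''=0,\qquad x(0)=0=x'(0),\quad x''(0)=a,$$ and let $h(a):=\lim_{t\to\infty}x_a'(t)$ (which exists and is finite and positive). Then the limit $\mu(a):=\lim_{t\to\infty}\big(h(a)t-x_a(t)\big)$ exists, is finite and is positive; that is, the graph of $x_a$ has the slant asymptote $h(a)t-\mu(a)$. Moreover, for all $t\ge 0$, $$\max\big(0,\,h(a)t-\mu(a)\big)\le x_a(t)\le h(a)t.$$ *)

theory Defs
  imports Complex_Main
begin

end

theory Submission
  imports Defs "HOL-Analysis.Analysis"
begin

text \<open>
  Since \<open>x'''/x'' = -c x\<^sup>p\<close>, the second derivative \<open>x''\<close> keeps the sign of \<open>x''(0) = a > 0\<close>;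
  hence \<open>x'\<close> increases strictly to \<open>h\<close> and the gap \<open>h t - x(t)\<close>, whose derivative is
  \<open>h - x'(t) > 0\<close>, increases from \<open>0\<close>. It is bounded because \<open>x' + x''/c\<close>, whose derivative
  is \<open>x''(1 - x\<^sup>p)\<close>, decreases once \<open>x \<ge> 1\<close>: so eventually \<open>x''/c \<ge> h - x'\<close>, i.e.
  \<open>x'/c\<close> grows faster than the gap, and \<open>x'/c \<le> h/c\<close>. The limit \<open>\<mu>\<close> of the gap is its
  supremum, which gives both bounds.
\<close>

lemma has_real_derivative_at_interior_atLeast:
  fixes f :: "real \<Rightarrow> real"
  assumes "l < t" "(f has_real_derivative D) (at t within {l..})"
  shows "(f has_real_derivative D) (at t)"
proof -
  have "t \<in> interior {l..}" using assms(1) by simp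
  then have "at t within {l..} = at t" by (rule at_within_interior)
  with assms(2) show ?thesis by simp
qed

lemma has_real_derivative_atLeast_imp_continuous_on:
  fixes f f' :: "real \<Rightarrow> real"
  assumes "\<And>t. l \<le> t \<Longrightarrow> (f has_real_derivative f' t) (at t within {l..})"
  shows "continuous_on {l..} f"
  unfolding continuous_on_eq_continuous_within
  using assms DERIV_continuous by blast

lemma has_real_derivative_atLeast_nonneg_imp_le:
  fixes f f' :: "real \<Rightarrow> real"
  assumes "\<And>t. l \<le> t \<Longrightarrow> (f has_real_derivative f' t) (at t within {l..})"
    and "l \<le> s" "s \<le> t" "\<And>u. s < u \<Longrightarrow> u < t \<Longrightarrow> 0 \<le> f' u"
  shows "f s \<le> f t"
proof (rule DERIV_nonneg_imp_increasing_open[OF assms(3)])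
  fix u assume "s < u" "u < t"
  then show "\<exists>y. DERIV f u :> y \<and> 0 \<le> y"
    using assms has_real_derivative_at_interior_atLeast[of l u f "f' u"] by force
next
  show "continuous_on {s..t} f"
    using has_real_derivative_atLeast_imp_continuous_on[OF assms(1)]
    by (rule continuous_on_subset) (use assms in auto)
qed

lemma has_real_derivative_atLeast_pos_imp_less:
  fixes f f' :: "real \<Rightarrow> real"
  assumes "\<And>t. l \<le> t \<Longrightarrow> (f has_real_derivative f' t) (at t within {l..})"
    and "l \<le> s" "s < t" "\<And>u. s < u \<Longrightarrow> u < t \<Longrightarrow> 0 < f' u"
  shows "f s < f t"
proof (rule DERIV_pos_imp_increasing_open[OF assms(3)])
  fix u assume "s < u" "u < t"
  then show "\<exists>y. DERIV f u :> y \<and> 0 < y"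
    using assms has_real_derivative_at_interior_atLeast[of l u f "f' u"] by force
next
  show "continuous_on {s..t} f"
    using has_real_derivative_atLeast_imp_continuous_on[OF assms(1)]
    by (rule continuous_on_subset) (use assms in auto)
qed

lemma first_nonpos_point:
  fixes f :: "real \<Rightarrow> real"
  assumes "continuous_on {0..} f" "0 < f 0" "0 \<le> s" "f s \<le> 0"
  obtains t0 where "0 < t0" "f t0 \<le> 0" "\<And>t. 0 \<le> t \<Longrightarrow> t < t0 \<Longrightarrow> 0 < f t"
proof -
  define S where "S = {t \<in> {0..s}. f t \<le> 0}"
  have "S \<noteq> {}" using assms(3,4) unfolding S_def by auto
  moreover have bdd: "bdd_below S" unfolding S_def by (auto intro: bdd_belowI[of _ 0])
  moreover have "closed S" unfolding S_def
    by (rule continuous_on_closed_Collect_le) (auto intro: continuous_on_subset[OF assms(1)])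
  ultimately have "Inf S \<in> S" by (rule closed_contains_Inf)
  then have "0 \<le> Inf S" "f (Inf S) \<le> 0" unfolding S_def by auto
  moreover have "0 < f t" if "0 \<le> t" "t < Inf S" for t
    using that cInf_lower[OF _ bdd, of t] \<open>Inf S \<in> S\<close> unfolding S_def by force
  ultimately show thesis using assms(2) that[of "Inf S"] by (cases "Inf S = 0") auto
qed

lemma linear_decay_lower_bound:
  fixes y q :: "real \<Rightarrow> real"
  assumes y': "\<And>t. 0 \<le> t \<Longrightarrow> (y has_real_derivative - q t * y t) (at t within {0..})"
    and "0 \<le> s"
    and y_nonneg: "\<And>t. 0 < t \<Longrightarrow> t < s \<Longrightarrow> 0 \<le> y t"
    and q_le: "\<And>t. 0 < t \<Longrightarrow> t < s \<Longrightarrow> q t \<le> K"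
  shows "y 0 * exp (- K * s) \<le> y s"
proof -
  define g where "g t = y t * exp (K * t)" for t
  have g': "(g has_real_derivative exp (K * t) * y t * (K - q t)) (at t within {0..})"
    if "0 \<le> t" for t
    unfolding g_def
    by (rule derivative_eq_intros y'[OF that] refl | simp add: algebra_simps)+
  have "g 0 \<le> g s"
    by (rule has_real_derivative_atLeast_nonneg_imp_le[OF g'])
      (use assms in \<open>auto intro!: mult_nonneg_nonneg\<close>)
  then have "y 0 \<le> y s * exp (K * s)" unfolding g_def by simp
  then have "y 0 * exp (- K * s) \<le> y s * exp (K * s) * exp (- K * s)" by simp
  also have "\<dots> = y s" by (simp add: mult.assoc flip: exp_add)
  finally show ?thesis .
qed

lemma mono_on_bdd_above_tendsto_Sup:
  fixes f :: "real \<Rightarrow> real"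
  assumes "mono_on {l..} f" "bdd_above (f ` {l..})"
  shows "(f \<longlongrightarrow> Sup (f ` {l..})) at_top"
proof (rule increasing_tendsto)
  show "\<forall>\<^sub>F t in at_top. f t \<le> Sup (f ` {l..})"
    using assms(2) by (auto intro: cSup_upper simp: eventually_at_top_linorder)
next
  fix u assume "u < Sup (f ` {l..})"
  then obtain s where "l \<le> s" "u < f s" using less_cSup_iff[OF _ assms(2)] by auto
  then have "u < f t" if "s \<le> t" for t
    using mono_onD[OF assms(1), of s t] that by simp
  then show "\<forall>\<^sub>F t in at_top. u < f t"
    unfolding eventually_at_top_linorder by blast
qed

locale generalized_blasius =
  fixes p c a :: real and x x1 x2 :: "real \<Rightarrow> real"
  assumes p: "1 \<le> p" and c: "0 < c" and a: "0 < a"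
    and x': "\<And>t. 0 \<le> t \<Longrightarrow> (x has_real_derivative x1 t) (at t within {0..})"
    and x'': "\<And>t. 0 \<le> t \<Longrightarrow> (x1 has_real_derivative x2 t) (at t within {0..})"
    and x''': "\<And>t. 0 \<le> t \<Longrightarrow>
               (x2 has_real_derivative (- c * (x t powr p) * x2 t)) (at t within {0..})"
    and init: "x 0 = 0" "x1 0 = 0" "x2 0 = a"
begin

lemma x2_pos:
  assumes "0 \<le> t"
  shows "0 < x2 t"
proof (rule ccontr)
  assume "\<not> 0 < x2 t"
  then obtain t0 where t0: "0 < t0" "x2 t0 \<le> 0"
    and x2_pos_before: "\<And>t. 0 \<le> t \<Longrightarrow> t < t0 \<Longrightarrow> 0 < x2 t"
    using first_nonpos_point has_real_derivative_atLeast_imp_continuous_on[OF x''']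
      assms init a by (metis not_less)
  have x1_nonneg: "0 \<le> x1 t" if "0 \<le> t" "t \<le> t0" for t
  proof -
    have "x1 0 \<le> x1 t"
      by (rule has_real_derivative_atLeast_nonneg_imp_le[OF x''])
        (use x2_pos_before that in \<open>auto intro: less_imp_le\<close>)
    then show ?thesis using init by simp
  qed
  have x_le: "x s \<le> x t" if "0 \<le> s" "s \<le> t" "t \<le> t0" for s t
    by (rule has_real_derivative_atLeast_nonneg_imp_le[OF x']) (use x1_nonneg that in auto)
  have x_nonneg: "0 \<le> x t" if "0 \<le> t" "t \<le> t0" for t
    using x_le[of 0 t] that init by simp
  have "x2 0 * exp (- (c * x t0 powr p) * t0) \<le> x2 t0"
  proof (rule linear_decay_lower_bound[where q = "\<lambda>t. c * x t powr p"])
    show "(x2 has_real_derivative - (c * x t powr p) * x2 t) (at t within {0..})"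
      if "0 \<le> t" for t
      using x'''[OF that] by simp
    show "c * x t powr p \<le> c * x t0 powr p" if "0 < t" "t < t0" for t
      using x_nonneg[of t] x_le[of t t0] that p c by (auto intro: powr_mono2)
  qed (use x2_pos_before t0 in \<open>auto intro: less_imp_le\<close>)
  moreover have "0 < x2 0 * exp (- (c * x t0 powr p) * t0)" using init a by simp
  ultimately show False using t0 by simp
qed

lemma x1_strict_mono:
  assumes "0 \<le> s" "s < t"
  shows "x1 s < x1 t"
  using has_real_derivative_atLeast_pos_imp_less[OF x'' assms] x2_pos assms by auto

lemma x1_mono:
  assumes "0 \<le> s" "s \<le> t"
  shows "x1 s \<le> x1 t"
  using x1_strict_mono[of s t] assms by (cases "s = t") auto

lemma x1_nonneg: "0 \<le> t \<Longrightarrow> 0 \<le> x1 t"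
  using x1_mono[of 0 t] init by simp

lemma x_mono:
  assumes "0 \<le> s" "s \<le> t"
  shows "x s \<le> x t"
  using has_real_derivative_atLeast_nonneg_imp_le[OF x' assms] x1_nonneg assms by auto

lemma x_nonneg: "0 \<le> t \<Longrightarrow> 0 \<le> x t"
  using x_mono[of 0 t] init by simp

lemma filterlim_x_at_top: "filterlim x at_top at_top"
proof (rule filterlim_at_top_mono)
  have "0 < x1 1" using x1_strict_mono[of 0 1] init by simp
  then show "filterlim (\<lambda>t. x1 1 * (t - 1)) at_top at_top"
    by (intro filterlim_tendsto_pos_mult_at_top[OF tendsto_const]
        filterlim_tendsto_add_at_top[OF tendsto_const filterlim_ident, of "-1", simplified])
  have x_minus_linear':
    "((\<lambda>t. x t - x1 1 * t) has_real_derivative x1 t - x1 1) (at t within {1..})"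
    if "1 \<le> t" for t
    using x'[of t] that
    by (auto intro!: derivative_eq_intros intro: has_field_derivative_subset)
  have "x1 1 * (t - 1) \<le> x t" if "1 \<le> t" for t
    using has_real_derivative_atLeast_nonneg_imp_le[OF x_minus_linear', of 1 t]
      x1_mono[of 1] x_nonneg[of 1] that
    by (force simp: algebra_simps)
  then show "\<forall>\<^sub>F t in at_top. x1 1 * (t - 1) \<le> x t"
    by (auto simp: eventually_at_top_linorder)
qed

end

locale generalized_blasius_limit = generalized_blasius +
  fixes h :: real
  assumes x1_tendsto: "(x1 \<longlongrightarrow> h) at_top"
begin

lemma x1_le_limit: "0 \<le> t \<Longrightarrow> x1 t \<le> h"
  by (rule tendsto_lowerbound[OF x1_tendsto])
    (auto intro!: x1_mono simp: eventually_at_top_linorder)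

lemma x1_less_limit: "0 \<le> t \<Longrightarrow> x1 t < h"
  using x1_strict_mono[of t "t + 1"] x1_le_limit[of "t + 1"] by simp

lemma limit_pos: "0 < h"
  using x1_less_limit[of 0] init by simp

lemma limit_le_x1_plus_x2_div_c_eventually:
  obtains T where "0 \<le> T" "\<And>t. T \<le> t \<Longrightarrow> h \<le> x1 t + x2 t / c"
proof -
  obtain T where T: "0 \<le> T" and x_ge_1: "\<And>t. T \<le> t \<Longrightarrow> 1 \<le> x t"
    using filterlim_x_at_top[unfolded filterlim_at_top, rule_format, of 1]
    unfolding eventually_at_top_linorder by (metis max.cobounded1 max.cobounded2 order_trans)
  define f where "f t = - (x1 t + x2 t / c)" for t
  have f': "(f has_real_derivative x2 t * (x t powr p - 1)) (at t within {0..})"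
    if "0 \<le> t" for t
    unfolding f_def
    by (rule derivative_eq_intros x''[OF that] x'''[OF that] refl
        | use c in \<open>simp add: field_simps\<close>)+
  have f_mono: "f s \<le> f t" if "T \<le> s" "s \<le> t" for s t
  proof (rule has_real_derivative_atLeast_nonneg_imp_le[OF f'])
    fix u assume "s < u" "u < t"
    then have "1 \<le> x u powr p" "0 < x2 u"
      using x_ge_1[of u] x2_pos[of u] that T p by (auto intro: ge_one_powr_ge_zero)
    then show "0 \<le> x2 u * (x u powr p - 1)" by simp
  qed (use that T in auto)
  have "h \<le> x1 t + x2 t / c" if "T \<le> t" for t
  proof (rule tendsto_upperbound[OF x1_tendsto])
    have "x1 s \<le> x1 t + x2 t / c" if "t \<le> s" for s
    proof -
      have "0 < x2 s / c" using x2_pos[of s] c that \<open>T \<le> t\<close> T by simp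
      then show ?thesis using f_mono[of t s] that \<open>T \<le> t\<close> unfolding f_def by simp
    qed
    then show "\<forall>\<^sub>F s in at_top. x1 s \<le> x1 t + x2 t / c"
      by (auto simp: eventually_at_top_linorder)
  qed simp
  with T that show thesis by blast
qed

lemma gap_has_derivative:
  "0 \<le> t \<Longrightarrow> ((\<lambda>t. h * t - x t) has_real_derivative h - x1 t) (at t within {0..})"
  by (rule derivative_eq_intros x' refl | simp)+

lemma gap_mono: "mono_on {0..} (\<lambda>t. h * t - x t)"
  by (rule mono_onI, rule has_real_derivative_atLeast_nonneg_imp_le[OF gap_has_derivative])
    (auto simp: x1_le_limit)

lemma x_1_less_limit: "x 1 < h"
  using has_real_derivative_atLeast_pos_imp_less[OF gap_has_derivative, of 0 1]
    x1_less_limit init by simp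

lemma gap_bdd_above: "bdd_above ((\<lambda>t. h * t - x t) ` {0..})"
proof -
  obtain T where T: "0 \<le> T" and lyapunov: "\<And>t. T \<le> t \<Longrightarrow> h \<le> x1 t + x2 t / c"
    using limit_le_x1_plus_x2_div_c_eventually by blast
  have x1_div_c_minus_gap': "((\<lambda>t. x1 t / c - (h * t - x t)) has_real_derivative x2 t / c - (h - x1 t))
      (at t within {0..})" if "0 \<le> t" for t
    by (intro DERIV_diff DERIV_cdivide x''[OF that] gap_has_derivative[OF that])
  have "h * t - x t \<le> h * T - x T + h / c" if "0 \<le> t" for t
  proof (cases "t \<le> T")
    case True
    have "0 < h / c" using limit_pos c by simp
    then show ?thesis using mono_onD[OF gap_mono, of t T] that True by simp
  next
    case False
    have "x1 T / c - (h * T - x T) \<le> x1 t / c - (h * t - x t)"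
      by (rule has_real_derivative_atLeast_nonneg_imp_le[OF x1_div_c_minus_gap'])
        (use False T lyapunov in \<open>auto simp: field_simps\<close>)
    moreover have "x1 t / c \<le> h / c" "0 \<le> x1 T / c"
      using x1_le_limit[of t] x1_nonneg[OF T] that c by (auto simp: divide_right_mono)
    ultimately show ?thesis by simp
  qed
  then show ?thesis by (intro bdd_aboveI[of _ "h * T - x T + h / c"]) auto
qed

end

theorem lemma3:
  fixes p c a h :: real and x x1 x2 :: "real \<Rightarrow> real"
  assumes p: "p \<ge> 1" and c: "c > 0" and a: "a > 0"
    and d0: "\<And>t. t \<ge> 0 \<Longrightarrow> (x has_real_derivative x1 t) (at t within {0..})"
    and d1: "\<And>t. t \<ge> 0 \<Longrightarrow> (x1 has_real_derivative x2 t) (at t within {0..})"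
    and d2: "\<And>t. t \<ge> 0 \<Longrightarrow>
               (x2 has_real_derivative (- c * (x t powr p) * x2 t)) (at t within {0..})"
    and init: "x 0 = 0" "x1 0 = 0" "x2 0 = a"
    and h: "(x1 \<longlongrightarrow> h) at_top"
  shows "\<exists>\<mu>. ((\<lambda>t. h * t - x t) \<longlongrightarrow> \<mu>) at_top \<and> \<mu> > 0 \<and>
           (\<forall>t\<ge>0. max 0 (h * t - \<mu>) \<le> x t \<and> x t \<le> h * t)"
proof -
  interpret generalized_blasius_limit p c a x x1 x2 h
    by unfold_locales (use assms in auto)
  let ?gap = "\<lambda>t. h * t - x t"
  define \<mu> where "\<mu> = Sup (?gap ` {0..})"
  have gap_le: "?gap t \<le> \<mu>" if "0 \<le> t" for t
    unfolding \<mu>_def using gap_bdd_above that by (auto intro: cSup_upper)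
  have "(?gap \<longlongrightarrow> \<mu>) at_top"
    unfolding \<mu>_def by (rule mono_on_bdd_above_tendsto_Sup[OF gap_mono gap_bdd_above])
  moreover have "0 < \<mu>" using gap_le[of 1] x_1_less_limit by simp
  moreover have "max 0 (h * t - \<mu>) \<le> x t \<and> x t \<le> h * t" if "0 \<le> t" for t
    using gap_le[OF that] x_nonneg[OF that] mono_onD[OF gap_mono, of 0 t] that init by simp
  ultimately show ?thesis by blast
qed

end
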